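(* Let $u$ be a non-constant twice differentiable function on $\mathbb{R}$ such that $u$, $u'$ and $u''$ are bounded, and assume that $|u'|$ attains its maximal value. Then $$\sup u'' \geq \frac{\|u'\|^2}{2\cdot \mathrm{osc}\,u},$$ where $\|u'\|=\sup_{\mathbb{R}}|u'|$ and $\mathrm{osc}\,u=\sup u-\inf u$. *)

theory Defs
  imports "HOL-Analysis.Analysis"
begin

end

theory Submission
  imports Defs
begin

text \<open>
  Let \<open>S = sup u''\<close> and let \<open>|u'|\<close> attain its maximum \<open>L\<close> at \<open>x\<^sub>0\<close>. Since \<open>u'' \<le> S\<close>, \<open>u\<close> lies
  below its osculating parabola \<open>u(x\<^sub>0) + u'(x\<^sub>0)(t - x\<^sub>0) + S(t - x\<^sub>0)\<^sup>2/2\<close>. Moving from \<open>x\<^sub>0\<close>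
  a distance \<open>s\<close> against the sign of \<open>u'(x\<^sub>0)\<close> therefore lowers \<open>u\<close> by at least
  \<open>L s - S s\<^sup>2/2\<close>, which cannot exceed \<open>osc u\<close>. Optimising over \<open>s\<close> (take \<open>s = L/S\<close>)
  gives \<open>L\<^sup>2/(2S) \<le> osc u\<close>; for \<open>S \<le> 0\<close> the drop would be unbounded.
\<close>

lemma convex_critical_point_is_min:
  fixes h h' h'' :: "real \<Rightarrow> real"
  assumes h: "\<And>x. (h has_real_derivative h' x) (at x)"
    and h': "\<And>x. (h' has_real_derivative h'' x) (at x)"
    and h''_nonneg: "\<And>x. h'' x \<ge> 0"
    and critical: "h' x0 = 0"
  shows "h x0 \<le> h t"
proof -
  have h'_mono: "h' a \<le> h' b" if "a \<le> b" for a b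
    using that h' h''_nonneg by (blast intro: DERIV_nonneg_imp_nondecreasing)
  show ?thesis
  proof (cases "x0 \<le> t")
    case True
    then show ?thesis
      using h h'_mono critical by (metis DERIV_nonneg_imp_nondecreasing)
  next
    case False
    then show ?thesis
      using h h'_mono critical by (metis DERIV_nonpos_imp_nonincreasing nle_le)
  qed
qed

lemma le_osculating_parabola:
  fixes u u' u'' :: "real \<Rightarrow> real"
  assumes d1: "\<And>x. (u has_real_derivative u' x) (at x)"
    and d2: "\<And>x. (u' has_real_derivative u'' x) (at x)"
    and le_M: "\<And>x. u'' x \<le> M"
  shows "u t \<le> u x0 + u' x0 * (t - x0) + M * (t - x0)\<^sup>2 / 2"
proof -
  define h where "h x = u x0 + u' x0 * (x - x0) + M * (x - x0)\<^sup>2 / 2 - u x" for x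
  have h_deriv: "(h has_real_derivative u' x0 + M * (x - x0) - u' x) (at x)" for x
    unfolding h_def by (auto intro!: derivative_eq_intros d1)
  have h'_deriv: "((\<lambda>x. u' x0 + M * (x - x0) - u' x) has_real_derivative M - u'' x) (at x)" for x
    by (auto intro!: derivative_eq_intros d2)
  have "h x0 \<le> h t"
    using le_M by (intro convex_critical_point_is_min[OF h_deriv h'_deriv]) auto
  then show ?thesis
    unfolding h_def by simp
qed

lemma quadratic_lower_bound:
  fixes L S D :: real
  assumes L_pos: "L > 0"
    and bound: "\<And>s. s \<ge> 0 \<Longrightarrow> L * s - S * s\<^sup>2 / 2 \<le> D"
  shows "L\<^sup>2 / (2 * D) \<le> S"
proof (cases "S > 0")
  case True
  have "L * (L / S) - S * (L / S)\<^sup>2 / 2 \<le> D"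
    using bound[of "L / S"] True L_pos by simp
  then have "L\<^sup>2 / (2 * S) \<le> D"
    using True by (simp add: field_simps power2_eq_square)
  moreover have "L\<^sup>2 / (2 * S) > 0"
    using True L_pos by simp
  ultimately have "D > 0"
    by linarith
  with \<open>L\<^sup>2 / (2 * S) \<le> D\<close> True show ?thesis
    by (simp add: field_simps)
next
  case False
  define s where "s = (\<bar>D\<bar> + 1) / L"
  have "s \<ge> 0"
    using L_pos by (simp add: s_def)
  then have "L * s - S * s\<^sup>2 / 2 \<le> D"
    by (rule bound)
  moreover have "S * s\<^sup>2 / 2 \<le> 0"
    using False by (simp add: mult_nonpos_nonneg)
  moreover have "L * s = \<bar>D\<bar> + 1"
    using L_pos by (simp add: s_def)
  ultimately show ?thesis
    by linarith
qed

theorem proposition2p1: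
  fixes u u' u'' :: "real \<Rightarrow> real"
  assumes d1: "\<And>x. (u has_real_derivative u' x) (at x)"
    and d2: "\<And>x. (u' has_real_derivative u'' x) (at x)"
    and nonconst: "\<exists>x y. u x \<noteq> u y"
    and bu: "bounded (range u)"
    and bu1: "bounded (range u')"
    and bu2: "bounded (range u'')"
    and attain: "\<exists>x0. \<forall>x. \<bar>u' x\<bar> \<le> \<bar>u' x0\<bar>"
  shows "(SUP x. u'' x) \<ge> (SUP x. \<bar>u' x\<bar>)\<^sup>2 / (2 * ((SUP x. u x) - (INF x. u x)))"
proof -
  obtain x0 where x0: "\<And>x. \<bar>u' x\<bar> \<le> \<bar>u' x0\<bar>"
    using attain by blast
  have sup_abs_u': "(SUP x. \<bar>u' x\<bar>) = \<bar>u' x0\<bar>"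
    by (rule cSup_eq_maximum) (use x0 in auto)
  have u''_le_sup: "u'' x \<le> (SUP x. u'' x)" for x
    using bu2 by (simp add: bounded_imp_bdd_above cSup_upper)
  have u_diff_le_osc: "u a - u b \<le> (SUP x. u x) - (INF x. u x)" for a b
    using bu by (intro diff_mono) (simp_all add: bounded_imp_bdd_above bounded_imp_bdd_below cSup_upper cInf_lower)
  have "\<bar>u' x0\<bar> > 0"
  proof (rule ccontr)
    assume "\<not> \<bar>u' x0\<bar> > 0"
    then have "u' x = 0" for x
      using x0[of x] by auto
    then show False
      using d1 nonconst by (metis DERIV_isconst_all)
  qed
  moreover have "\<bar>u' x0\<bar> * s - (SUP x. u'' x) * s\<^sup>2 / 2 \<le> (SUP x. u x) - (INF x. u x)"
    if "s \<ge> 0" for s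
  proof -
    define t where "t = x0 - sgn (u' x0) * s"
    have "u t \<le> u x0 + u' x0 * (t - x0) + (SUP x. u'' x) * (t - x0)\<^sup>2 / 2"
      using d1 d2 u''_le_sup by (rule le_osculating_parabola)
    moreover have "u' x0 * (t - x0) = - \<bar>u' x0\<bar> * s" "(t - x0)\<^sup>2 = s\<^sup>2"
      using \<open>\<bar>u' x0\<bar> > 0\<close> by (auto simp: t_def sgn_if power2_eq_square)
    ultimately show ?thesis
      using u_diff_le_osc[of x0 t] by simp
  qed
  ultimately show ?thesis
    unfolding sup_abs_u' by (rule quadratic_lower_bound)
qed

end
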